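(* For every $\omega\in S$ and every $\epsilon>0$ there exist $\omega'\in S$ with $|\omega'-\omega|<\epsilon$ and a Seifert matrix $V$ such that $\Delta_V(t)$ has exactly two nonreal roots, namely $\omega'$ and $\bar\omega'$, both simple and lying on the unit circle. Consequently, as a function of $\zeta\in S$, $\sigma_\zeta(V)=0$ whenever $\mathrm{Re}\,\zeta>\mathrm{Re}\,\omega'$, and $\sigma_\zeta(V)$ equals a nonzero constant whenever $\mathrm{Re}\,\zeta<\mathrm{Re}\,\omega'$.
   Context: A Seifert matrix is a square integral matrix $V$ with $\det(V-V^T)=\pm1$; $\Delta_V(t)=\det(V-tV^T)$; for a unit complex number $\zeta$, $\sigma_\zeta(V)$ is the signature of $(1-\zeta)V+(1-\bar\zeta)V^T$. $S$ is the set of unit complex numbers with positive imaginary part. *)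

theory Defs
  imports "Jordan_Normal_Form.Char_Poly"
begin

definition S_set :: "complex set" where
  "S_set = {z. cmod z = 1 \<and> Im z > 0}"

definition seifert_matrix :: "int mat \<Rightarrow> bool" where
  "seifert_matrix V \<longleftrightarrow> dim_row V = dim_col V \<and>
     (det (V - transpose_mat V) = 1 \<or> det (V - transpose_mat V) = -1)"

definition alexander_poly :: "int mat \<Rightarrow> int poly" where
  "alexander_poly V = det (map_mat (\<lambda>a. [:a:]) V - map_mat (\<lambda>a. [:0, a:]) (transpose_mat V))"

definition signature :: "complex mat \<Rightarrow> int" where
  "signature A =
     int (\<Sum>x\<in>{x. poly (char_poly A) x = 0 \<and> Im x = 0 \<and> Re x > 0}. order x (char_poly A))
   - int (\<Sum>x\<in>{x. poly (char_poly A) x = 0 \<and> Im x = 0 \<and> Re x < 0}. order x (char_poly A))"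

definition tl_signature :: "complex \<Rightarrow> int mat \<Rightarrow> int" where
  "tl_signature \<zeta> V =
     (let W = map_mat of_int V :: complex mat
      in signature ((1 - \<zeta>) \<cdot>\<^sub>m W + (1 - cnj \<zeta>) \<cdot>\<^sub>m transpose_mat W))"

end

theory Submission
  imports Defs
begin

text \<open>
  Take \<open>V = [[A, I], [0, I]]\<close> with the integral symmetric block \<open>A = [[T, q], [q, 0]]\<close>,
  whose eigenvalues satisfy \<open>\<xi>\<^sub>1 + \<xi>\<^sub>2 = T\<close> and \<open>\<xi>\<^sub>1 \<xi>\<^sub>2 = -q\<^sup>2\<close>. Then \<open>V - V\<^sup>T\<close> is the
  standard symplectic matrix, and block determinants give \<open>\<Delta>\<^sub>V(t) = \<Prod>\<^sub>i (\<xi>\<^sub>i (1 - t)\<^sup>2 + t)\<close>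
  and, for \<open>\<zeta>\<close> on the unit circle with \<open>u = |1 - \<zeta>|\<^sup>2\<close>, the characteristic polynomial
  \<open>\<Prod>\<^sub>i ((x - u)(x - u \<xi>\<^sub>i) - u)\<close> of the Tristram-Levine form. A factor \<open>\<xi> (1 - t)\<^sup>2 + t\<close> has
  two real roots if \<open>\<xi> < 0\<close> and two conjugate roots on the unit circle with real part
  \<open>1 - 1/(2\<xi>)\<close> if \<open>\<xi> > 1/4\<close>; the quadratic \<open>(x - u)(x - u \<xi>) - u\<close> has real roots of
  opposite signs when \<open>u \<xi> < 1\<close> and two positive roots when \<open>u \<xi> > 1\<close>. So the signature
  jumps from 0 to 2 exactly at the root of the \<open>\<xi>\<^sub>1\<close>-factor. Finally the positive eigenvalue
  \<open>\<xi>\<^sub>1\<close> can be placed in any interval of \<open>(0, \<infinity>)\<close>, so that root can be placed near any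
  \<open>\<omega>\<close>.
\<close>

lemma det_2x2:
  "det (mat 2 2 (\<lambda>(i, j). [[a, b], [c, d]] ! i ! j)) = a * d - b * (c :: 'a :: comm_ring_1)"
  by (subst laplace_expansion_column[of _ 2 0])
    (auto simp: cofactor_def numeral_2_eq_2 lessThan_Suc mat_delete_def det_single)

lemma det_four_block_scalar_2x2:
  fixes a b c d \<beta> \<gamma> \<delta> :: "'a :: idom"
  shows "det (four_block_mat (mat 2 2 (\<lambda>(i, j). [[a, b], [c, d]] ! i ! j))
      (\<beta> \<cdot>\<^sub>m 1\<^sub>m 2) (\<gamma> \<cdot>\<^sub>m 1\<^sub>m 2) (\<delta> \<cdot>\<^sub>m 1\<^sub>m 2))
    = (\<delta> * a - \<beta> * \<gamma>) * (\<delta> * d - \<beta> * \<gamma>) - \<delta>^2 * b * c"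
proof -
  let ?A = "mat 2 2 (\<lambda>(i, j). [[a, b], [c, d]] ! i ! j)"
  have "det (four_block_mat ?A (\<beta> \<cdot>\<^sub>m 1\<^sub>m 2) (\<gamma> \<cdot>\<^sub>m 1\<^sub>m 2) (\<delta> \<cdot>\<^sub>m 1\<^sub>m 2))
      = det (?A * (\<delta> \<cdot>\<^sub>m 1\<^sub>m 2) - \<beta> \<cdot>\<^sub>m 1\<^sub>m 2 * (\<gamma> \<cdot>\<^sub>m 1\<^sub>m 2))"
    by (rule det_four_block_mat) auto
  also have "?A * (\<delta> \<cdot>\<^sub>m 1\<^sub>m 2) - \<beta> \<cdot>\<^sub>m 1\<^sub>m 2 * (\<gamma> \<cdot>\<^sub>m 1\<^sub>m 2)
      = mat 2 2 (\<lambda>(i, j). [[\<delta> * a - \<beta> * \<gamma>, \<delta> * b], [\<delta> * c, \<delta> * d - \<beta> * \<gamma>]] ! i ! j)"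
    by (rule eq_matI) (auto simp: less_2_cases_iff algebra_simps)
  finally show ?thesis
    by (simp add: det_2x2 power2_eq_square algebra_simps)
qed

lemma poly_of_int_det:
  "poly (map_poly (of_int :: int \<Rightarrow> 'a :: comm_ring_1) (det A)) z
     = det (map_mat (\<lambda>p. poly (map_poly of_int p) z) A)"
proof -
  interpret comm_ring_hom "\<lambda>p. poly (map_poly (of_int :: int \<Rightarrow> 'a) p) z"
    by unfold_locales (simp_all add: of_int_poly_hom.hom_add of_int_poly_hom.hom_mult)
  show ?thesis by simp
qed

lemma less_4_cases_iff: "(i :: nat) < 4 \<longleftrightarrow> i = 0 \<or> i = 1 \<or> i = 2 \<or> i = 3"
  by auto

lemma real_quadratic_roots:
  fixes B P :: real
  assumes "4 * P \<le> B^2"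
  obtains r\<^sub>1 r\<^sub>2 where "r\<^sub>1 \<le> r\<^sub>2" "r\<^sub>1 + r\<^sub>2 = B" "r\<^sub>1 * r\<^sub>2 = P"
proof
  let ?s = "sqrt (B^2 - 4 * P)"
  have "?s^2 = B^2 - 4 * P"
    using assms by simp
  then show "(B - ?s) / 2 * ((B + ?s) / 2) = P"
    by (simp add: field_simps power2_eq_square)
qed (use assms in \<open>auto simp: field_simps\<close>)

lemma mult_linear_of_real:
  fixes x :: complex
  shows "(x - of_real r\<^sub>1) * (x - of_real r\<^sub>2)
    = x^2 - of_real (r\<^sub>1 + r\<^sub>2) * x + of_real (r\<^sub>1 * r\<^sub>2)"
  by (simp add: algebra_simps power2_eq_square)

lemma poly_prod_linear:
  fixes f :: "'b \<Rightarrow> 'a :: comm_ring_1"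
  shows "poly (\<Prod>a\<leftarrow>as. [:- f a, 1:]) x = (\<Prod>a\<leftarrow>as. x - f a)"
  by (induction as) (simp_all add: algebra_simps del: mult_pCons_left)

lemma order_prod_linear:
  fixes as :: "'a :: idom list"
  shows "order x (\<Prod>a\<leftarrow>as. [:-a, 1:]) = count_list as x"
proof -
  have "order x (\<Prod>a\<leftarrow>as. [:-a, 1:]) = (\<Sum>a\<leftarrow>as. order x [:-a, 1:])"
    by (subst order_prod_list) (auto simp: comp_def)
  also have "\<dots> = count_list as x"
    by (induction as) (auto simp: order_linear')
  finally show ?thesis .
qed

lemma poly_smult_prod_linear_eq_0_iff:
  fixes as :: "'a :: idom list"
  assumes "k \<noteq> 0"
  shows "poly (Polynomial.smult k (\<Prod>a\<leftarrow>as. [:-a, 1:])) z = 0 \<longleftrightarrow> z \<in> set as"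
  using assms by (induction as) auto

definition root_count :: "('a \<Rightarrow> bool) \<Rightarrow> 'a :: idom poly \<Rightarrow> nat" where
  "root_count P p = (\<Sum>x\<in>{x. poly p x = 0 \<and> P x}. order x p)"

lemma root_count_mult:
  assumes "p \<noteq> 0" and "q \<noteq> 0"
  shows "root_count P (p * q) = root_count P p + root_count P q"
proof -
  let ?A = "{x. poly p x = 0 \<and> P x}" and ?B = "{x. poly q x = 0 \<and> P x}"
  have "finite ?A" "finite ?B"
    using poly_roots_finite[OF assms(1)] poly_roots_finite[OF assms(2)]
    by (auto intro: finite_subset[rotated])
  have "root_count P (p * q) = (\<Sum>x\<in>?A \<union> ?B. order x p + order x q)"
    unfolding root_count_def using assms by (intro sum.cong) (auto simp: order_mult)
  also have "\<dots> = (\<Sum>x\<in>?A \<union> ?B. order x p) + (\<Sum>x\<in>?A \<union> ?B. order x q)"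
    by (rule sum.distrib)
  also have "(\<Sum>x\<in>?A \<union> ?B. order x p) = (\<Sum>x\<in>?A. order x p)"
    using \<open>finite ?A\<close> \<open>finite ?B\<close> by (intro sum.mono_neutral_right) (auto simp: order_root)
  also have "(\<Sum>x\<in>?A \<union> ?B. order x q) = (\<Sum>x\<in>?B. order x q)"
    using \<open>finite ?A\<close> \<open>finite ?B\<close> by (intro sum.mono_neutral_right) (auto simp: order_root)
  finally show ?thesis
    unfolding root_count_def .
qed

lemma root_count_prod_linear:
  "root_count P (\<Prod>a\<leftarrow>as. [:-a, 1:]) = length (filter P as)"
proof (induction as)
  case Nil
  then show ?case
    by (simp add: root_count_def)
next
  case (Cons a as)
  have "root_count P [:-a, 1:] = (if P a then 1 else 0)"
  proof -
    have "{x. poly [:-a, 1:] x = 0 \<and> P x} = (if P a then {a} else {})"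
      by auto
    then show ?thesis
      unfolding root_count_def by (simp add: order_linear')
  qed
  moreover have "(\<Prod>a\<leftarrow>as. [:-a, 1:]) \<noteq> 0"
    by (auto simp: prod_list_zero_iff)
  ultimately show ?case
    using Cons.IH by (simp add: root_count_mult del: mult_pCons_left)
qed

lemma signature_eq_sum_sgn:
  assumes "char_poly A = (\<Prod>r\<leftarrow>rs. [:-complex_of_real r, 1:])"
  shows "of_int (signature A) = (\<Sum>r\<leftarrow>rs. sgn r)"
proof -
  have char_poly: "char_poly A = (\<Prod>a\<leftarrow>map complex_of_real rs. [:-a, 1:])"
    unfolding assms by (simp add: comp_def)
  have "signature A = int (length (filter (\<lambda>r. 0 < r) rs)) - int (length (filter (\<lambda>r. r < 0) rs))"
    unfolding signature_def root_count_def[symmetric, unfolded conj_assoc] char_poly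
      root_count_prod_linear by (simp add: filter_map comp_def)
  also have "of_int \<dots> = (\<Sum>r\<leftarrow>rs. sgn r)"
    by (induction rs) (auto simp: sgn_if)
  finally show ?thesis
    by simp
qed

lemma sgn_add_sgn_of_mult_neg: "r\<^sub>1 * r\<^sub>2 < 0 \<Longrightarrow> sgn r\<^sub>1 + sgn r\<^sub>2 = (0 :: real)"
  by (auto simp: sgn_if mult_less_0_iff)

lemma sgn_add_sgn_of_mult_pos: "0 < r\<^sub>1 * r\<^sub>2 \<Longrightarrow> 0 < r\<^sub>1 + r\<^sub>2 \<Longrightarrow> sgn r\<^sub>1 + sgn r\<^sub>2 = (2 :: real)"
  by (auto simp: sgn_if zero_less_mult_iff)

definition circle_point :: "real \<Rightarrow> complex" where
  "circle_point c = Complex c (sqrt (1 - c^2))"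

lemma Re_circle_point [simp]: "Re (circle_point c) = c"
  and Im_circle_point [simp]: "Im (circle_point c) = sqrt (1 - c^2)"
  by (simp_all add: circle_point_def)

lemma circle_point_in_S_set:
  assumes "\<bar>c\<bar> < 1"
  shows "circle_point c \<in> S_set"
proof -
  have "c^2 < 1"
    using assms by (simp add: abs_square_less_1)
  then show ?thesis
    by (simp add: S_set_def circle_point_def cmod_def)
qed

lemma circle_point_Re:
  assumes "\<omega> \<in> S_set"
  shows "circle_point (Re \<omega>) = \<omega>"
proof -
  have "(Re \<omega>)^2 + (Im \<omega>)^2 = 1" and "Im \<omega> > 0"
    using assms by (auto simp: S_set_def cmod_def)
  then show ?thesis
    by (simp add: complex_eq_iff real_sqrt_unique)
qed

lemma abs_Re_S_set_less_1:
  assumes "\<omega> \<in> S_set"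
  shows "\<bar>Re \<omega>\<bar> < 1"
proof -
  have "(Re \<omega>)^2 + (Im \<omega>)^2 = 1" and "Im \<omega> > 0"
    using assms by (auto simp: S_set_def cmod_def)
  then have "(Re \<omega>)^2 < 1"
    by (smt (verit) zero_less_power2)
  then show ?thesis
    by (simp add: abs_square_less_1)
qed

lemma circle_point_quadratic:
  assumes "\<bar>c\<bar> < 1"
  shows "(z - circle_point c) * (z - cnj (circle_point c)) = z^2 - 2 * of_real c * z + 1"
proof -
  have "c^2 < 1"
    using assms by (simp add: abs_square_less_1)
  then have prod: "circle_point c * cnj (circle_point c) = 1"
    by (simp add: circle_point_def complex_eq_iff power2_eq_square[symmetric])
  have sum: "circle_point c + cnj (circle_point c) = 2 * of_real c"
    by (simp add: complex_eq_iff)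
  have "(z - circle_point c) * (z - cnj (circle_point c))
      = z^2 - (circle_point c + cnj (circle_point c)) * z + circle_point c * cnj (circle_point c)"
    by (simp add: algebra_simps power2_eq_square)
  then show ?thesis
    unfolding prod sum .
qed

definition block_seifert_mat :: "int \<Rightarrow> int \<Rightarrow> int mat" where
  "block_seifert_mat T q =
     mat 4 4 (\<lambda>(i, j). [[T, q, 1, 0], [q, 0, 0, 1], [0, 0, 1, 0], [0, 0, 0, 1]] ! i ! j)"

lemma seifert_matrix_block_seifert_mat: "seifert_matrix (block_seifert_mat T q)"
proof -
  let ?V = "block_seifert_mat T q"
  have "?V - transpose_mat ?V
      = four_block_mat (mat 2 2 (\<lambda>(i, j). [[0, 0], [0, 0]] ! i ! j))
          (1 \<cdot>\<^sub>m 1\<^sub>m 2) ((- 1) \<cdot>\<^sub>m 1\<^sub>m 2) (0 \<cdot>\<^sub>m 1\<^sub>m 2)"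
    by (rule eq_matI) (auto simp: block_seifert_mat_def less_4_cases_iff less_2_cases_iff)
  then have "det (?V - transpose_mat ?V) = 1"
    by (simp add: det_four_block_scalar_2x2)
  then show ?thesis
    by (simp add: seifert_matrix_def block_seifert_mat_def)
qed

lemma poly_alexander_poly_block_seifert_mat:
  fixes z :: "'a :: idom"
  assumes "\<xi>\<^sub>1 + \<xi>\<^sub>2 = of_int T" and "\<xi>\<^sub>1 * \<xi>\<^sub>2 = - of_int (q^2)"
  shows "poly (map_poly of_int (alexander_poly (block_seifert_mat T q))) z
    = (\<xi>\<^sub>1 * (1 - z)^2 + z) * (\<xi>\<^sub>2 * (1 - z)^2 + z)"
proof -
  let ?V = "block_seifert_mat T q"
  have "map_mat (\<lambda>p. poly (map_poly of_int p) z)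
        (map_mat (\<lambda>a. [:a:]) ?V - map_mat (\<lambda>a. [:0, a:]) (transpose_mat ?V))
      = four_block_mat
          (mat 2 2 (\<lambda>(i, j).
            [[(1 - z) * of_int T, (1 - z) * of_int q], [(1 - z) * of_int q, 0]] ! i ! j))
          (1 \<cdot>\<^sub>m 1\<^sub>m 2) ((- z) \<cdot>\<^sub>m 1\<^sub>m 2) ((1 - z) \<cdot>\<^sub>m 1\<^sub>m 2)"
    by (rule eq_matI)
      (auto simp: block_seifert_mat_def less_4_cases_iff less_2_cases_iff
        of_int_hom.map_poly_pCons_hom algebra_simps)
  then have "poly (map_poly of_int (alexander_poly ?V)) z
      = ((1 - z)^2 * of_int T + z) * z - (1 - z)^4 * (of_int q)^2"
    by (simp add: alexander_poly_def poly_of_int_det det_four_block_scalar_2x2 algebra_simps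
        power2_eq_square power4_eq_xxxx)
  also have "\<dots> = ((1 - z)^2 * (\<xi>\<^sub>1 + \<xi>\<^sub>2) + z) * z + (1 - z)^4 * (\<xi>\<^sub>1 * \<xi>\<^sub>2)"
    using assms by simp
  also have "\<dots> = (\<xi>\<^sub>1 * (1 - z)^2 + z) * (\<xi>\<^sub>2 * (1 - z)^2 + z)"
    by (simp add: algebra_simps power2_eq_square power4_eq_xxxx)
  finally show ?thesis .
qed

lemma abs_one_minus_inverse_less_1:
  fixes \<xi> :: real
  assumes "1/4 < \<xi>"
  shows "\<bar>1 - 1 / (2 * \<xi>)\<bar> < 1"
proof -
  have "0 < 1 / (2 * \<xi>)" and "1 / (2 * \<xi>) < 2"
    using assms by (auto simp: field_simps)
  then show ?thesis
    by linarith
qed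

lemma alexander_factor_normalize:
  fixes \<xi> :: real and z :: complex
  assumes "\<xi> \<noteq> 0"
  shows "of_real \<xi> * (1 - z)^2 + z = of_real \<xi> * (z^2 - of_real (2 - 1 / \<xi>) * z + 1)"
proof -
  have "\<xi> * (2 - 1 / \<xi>) = 2 * \<xi> - 1"
    using assms by (simp add: field_simps)
  then have coeff: "complex_of_real \<xi> * of_real (2 - 1 / \<xi>) = 2 * of_real \<xi> - 1"
    by (metis of_real_1 of_real_diff of_real_mult of_real_numeral)
  have "of_real \<xi> * (z^2 - of_real (2 - 1 / \<xi>) * z + 1)
      = of_real \<xi> * z^2 - (complex_of_real \<xi> * of_real (2 - 1 / \<xi>)) * z + of_real \<xi>"
    by (simp add: algebra_simps)
  then show ?thesis
    unfolding coeff by (simp add: algebra_simps power2_eq_square)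
qed

lemma alexander_factor_circle_roots:
  fixes \<xi> :: real and z :: complex
  assumes "1/4 < \<xi>"
  defines "w \<equiv> circle_point (1 - 1 / (2 * \<xi>))"
  shows "of_real \<xi> * (1 - z)^2 + z = of_real \<xi> * ((z - w) * (z - cnj w))"
proof -
  have "2 - 1 / \<xi> = 2 * (1 - 1 / (2 * \<xi>))"
    by (simp add: field_simps)
  then show ?thesis
    using assms alexander_factor_normalize[of \<xi> z]
    by (simp add: w_def circle_point_quadratic abs_one_minus_inverse_less_1)
qed

lemma alexander_factor_real_roots:
  fixes \<xi> :: real
  assumes "\<xi> < 0"
  obtains r\<^sub>1 r\<^sub>2 :: real
  where "\<And>z :: complex.
    of_real \<xi> * (1 - z)^2 + z = of_real \<xi> * ((z - of_real r\<^sub>1) * (z - of_real r\<^sub>2))"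
proof -
  have "2 \<le> 2 - 1 / \<xi>"
    using assms by simp
  then have "4 * 1 \<le> (2 - 1 / \<xi>)^2"
    using power_mono[of 2 "2 - 1 / \<xi>" 2] by simp
  then obtain r\<^sub>1 r\<^sub>2 where "r\<^sub>1 + r\<^sub>2 = 2 - 1 / \<xi>" "r\<^sub>1 * r\<^sub>2 = 1"
    by (rule real_quadratic_roots)
  then have factor: "(z - of_real r\<^sub>1) * (z - of_real r\<^sub>2) = z^2 - of_real (2 - 1 / \<xi>) * z + 1"
    for z :: complex
    by (simp only: mult_linear_of_real of_real_1)
  have "\<xi> \<noteq> 0"
    using assms by simp
  show ?thesis
    by (rule that[of r\<^sub>1 r\<^sub>2]) (simp only: alexander_factor_normalize[OF \<open>\<xi> \<noteq> 0\<close>] factor)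
qed

lemma alexander_poly_block_seifert_mat_roots:
  fixes \<xi>\<^sub>1 \<xi>\<^sub>2 :: real
  assumes eigen: "\<xi>\<^sub>1 + \<xi>\<^sub>2 = of_int T" "\<xi>\<^sub>1 * \<xi>\<^sub>2 = - of_int (q^2)"
    and "1/4 < \<xi>\<^sub>1" and "\<xi>\<^sub>2 < 0"
  defines "w \<equiv> circle_point (1 - 1 / (2 * \<xi>\<^sub>1))"
    and "D \<equiv> map_poly (of_int :: int \<Rightarrow> complex) (alexander_poly (block_seifert_mat T q))"
  shows "{z. poly D z = 0 \<and> Im z \<noteq> 0} = {w, cnj w} \<and> order w D = 1 \<and> order (cnj w) D = 1"
proof -
  obtain r\<^sub>1 r\<^sub>2 :: real where real_factor:
    "\<And>z :: complex.
      of_real \<xi>\<^sub>2 * (1 - z)^2 + z = of_real \<xi>\<^sub>2 * ((z - of_real r\<^sub>1) * (z - of_real r\<^sub>2))"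
    using alexander_factor_real_roots \<open>\<xi>\<^sub>2 < 0\<close> by blast
  let ?roots = "[w, cnj w, of_real r\<^sub>1, of_real r\<^sub>2]"
  have D: "D = Polynomial.smult (of_real (\<xi>\<^sub>1 * \<xi>\<^sub>2)) (\<Prod>a\<leftarrow>?roots. [:-a, 1:])"
  proof (rule poly_eq_poly_eq_iff[THEN iffD1], rule ext)
    fix z :: complex
    have "poly D z = (of_real \<xi>\<^sub>1 * (1 - z)^2 + z) * (of_real \<xi>\<^sub>2 * (1 - z)^2 + z)"
      unfolding D_def
      by (rule poly_alexander_poly_block_seifert_mat)
        (use arg_cong[OF eigen(1), of complex_of_real] arg_cong[OF eigen(2), of complex_of_real]
          in simp_all)
    also have "\<dots> = poly (Polynomial.smult (of_real (\<xi>\<^sub>1 * \<xi>\<^sub>2)) (\<Prod>a\<leftarrow>?roots. [:-a, 1:])) z"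
      unfolding real_factor alexander_factor_circle_roots[OF \<open>1/4 < \<xi>\<^sub>1\<close>, folded w_def]
      by (simp add: algebra_simps)
    finally show "poly D z
        = poly (Polynomial.smult (of_real (\<xi>\<^sub>1 * \<xi>\<^sub>2)) (\<Prod>a\<leftarrow>?roots. [:-a, 1:])) z" .
  qed
  have nonzero: "complex_of_real (\<xi>\<^sub>1 * \<xi>\<^sub>2) \<noteq> 0"
    using assms(3,4) by simp
  have roots: "poly D z = 0 \<longleftrightarrow> z \<in> set ?roots" for z
    by (simp only: D poly_smult_prod_linear_eq_0_iff[OF nonzero])
  have orders: "order z D = count_list ?roots z" for z
    by (simp only: D order_smult[OF nonzero] order_prod_linear)
  have "Im w > 0"
    using circle_point_in_S_set[OF abs_one_minus_inverse_less_1[OF \<open>1/4 < \<xi>\<^sub>1\<close>]]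
    by (simp add: w_def S_set_def)
  then show ?thesis
    unfolding roots orders by (auto simp: complex_eq_iff)
qed

definition tl_form :: "complex \<Rightarrow> int mat \<Rightarrow> complex mat" where
  "tl_form \<zeta> V = (let W = map_mat of_int V in (1 - \<zeta>) \<cdot>\<^sub>m W + (1 - cnj \<zeta>) \<cdot>\<^sub>m transpose_mat W)"

lemma tl_signature_eq_signature_tl_form: "tl_signature \<zeta> V = signature (tl_form \<zeta> V)"
  by (simp add: tl_signature_def tl_form_def Let_def)

lemma poly_char_poly_tl_form_block_seifert_mat:
  fixes \<zeta> x :: complex and \<xi>\<^sub>1 \<xi>\<^sub>2 :: real
  assumes eigen: "\<xi>\<^sub>1 + \<xi>\<^sub>2 = of_int T" "\<xi>\<^sub>1 * \<xi>\<^sub>2 = - of_int (q^2)"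
    and "cmod \<zeta> = 1"
  defines "u \<equiv> complex_of_real (2 - 2 * Re \<zeta>)"
  shows "poly (char_poly (tl_form \<zeta> (block_seifert_mat T q))) x
    = ((x - u) * (x - u * of_real \<xi>\<^sub>1) - u) * ((x - u) * (x - u * of_real \<xi>\<^sub>2) - u)"
proof -
  let ?H = "tl_form \<zeta> (block_seifert_mat T q)"
  have sum: "(1 - \<zeta>) + (1 - cnj \<zeta>) = u"
    by (simp add: u_def complex_eq_iff)
  have "\<zeta> * cnj \<zeta> = 1"
    using assms(3) by (simp add: complex_mult_cnj cmod_def)
  then have prod: "(1 - \<zeta>) * (1 - cnj \<zeta>) = u"
    by (simp add: u_def complex_eq_iff algebra_simps)
  then have prod': "(- (1 - \<zeta>)) * (- (1 - cnj \<zeta>)) = u"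
    by (simp only: minus_mult_minus)
  have "?H \<in> carrier_mat 4 4"
    by (simp add: tl_form_def Let_def block_seifert_mat_def)
  then have "poly (char_poly ?H) x = det (- char_matrix ?H x)"
    by (rule char_poly_matrix)
  also have "- char_matrix ?H x = four_block_mat
      (mat 2 2 (\<lambda>(i, j). [[x - u * of_int T, - u * of_int q], [- u * of_int q, x]] ! i ! j))
      ((- (1 - \<zeta>)) \<cdot>\<^sub>m 1\<^sub>m 2) ((- (1 - cnj \<zeta>)) \<cdot>\<^sub>m 1\<^sub>m 2) ((x - u) \<cdot>\<^sub>m 1\<^sub>m 2)"
    unfolding sum[symmetric]
    by (rule eq_matI) (auto simp: tl_form_def Let_def block_seifert_mat_def char_matrix_def
        less_4_cases_iff less_2_cases_iff algebra_simps)
  also have "det \<dots>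
      = ((x - u) * (x - u * of_int T) - u) * ((x - u) * x - u) - (x - u)^2 * u^2 * (of_int q)^2"
    unfolding det_four_block_scalar_2x2 prod' by (simp add: power2_eq_square algebra_simps)
  also have "\<dots> = ((x - u) * (x - u * (of_real \<xi>\<^sub>1 + of_real \<xi>\<^sub>2)) - u) * ((x - u) * x - u)
      + (x - u)^2 * u^2 * (of_real \<xi>\<^sub>1 * of_real \<xi>\<^sub>2)"
    using arg_cong[OF eigen(1), of complex_of_real] arg_cong[OF eigen(2), of complex_of_real]
    by simp
  also have "\<dots> = ((x - u) * (x - u * of_real \<xi>\<^sub>1) - u) * ((x - u) * (x - u * of_real \<xi>\<^sub>2) - u)"
    by (simp add: algebra_simps power2_eq_square)
  finally show ?thesis .
qed

lemma tl_signature_block_seifert_mat_sgn: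
  fixes \<xi>\<^sub>1 \<xi>\<^sub>2 :: real and \<zeta> :: complex
  assumes eigen: "\<xi>\<^sub>1 + \<xi>\<^sub>2 = of_int T" "\<xi>\<^sub>1 * \<xi>\<^sub>2 = - of_int (q^2)"
    and "\<zeta> \<in> S_set"
  defines "u \<equiv> 2 - 2 * Re \<zeta>"
  obtains r\<^sub>1 r\<^sub>2 r\<^sub>3 r\<^sub>4 :: real
  where "r\<^sub>1 + r\<^sub>2 = u * (1 + \<xi>\<^sub>1)" "r\<^sub>1 * r\<^sub>2 = u * (u * \<xi>\<^sub>1 - 1)"
    and "r\<^sub>3 + r\<^sub>4 = u * (1 + \<xi>\<^sub>2)" "r\<^sub>3 * r\<^sub>4 = u * (u * \<xi>\<^sub>2 - 1)"
    and "of_int (tl_signature \<zeta> (block_seifert_mat T q)) = sgn r\<^sub>1 + sgn r\<^sub>2 + (sgn r\<^sub>3 + sgn r\<^sub>4)"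
proof -
  have "0 < u"
    using abs_Re_S_set_less_1[OF \<open>\<zeta> \<in> S_set\<close>] by (simp add: u_def)
  have split: "\<exists>r r'. r + r' = u * (1 + \<xi>) \<and> r * r' = u * (u * \<xi> - 1)" for \<xi>
  proof -
    have "(u * (1 + \<xi>))^2 - 4 * (u * (u * \<xi> - 1)) = (u * (1 - \<xi>))^2 + 4 * u"
      by (simp add: power2_eq_square algebra_simps)
    then have "4 * (u * (u * \<xi> - 1)) \<le> (u * (1 + \<xi>))^2"
      using \<open>0 < u\<close> by (smt (verit) zero_le_power2)
    then show ?thesis
      by (metis real_quadratic_roots)
  qed
  obtain r\<^sub>1 r\<^sub>2 where r\<^sub>1\<^sub>2: "r\<^sub>1 + r\<^sub>2 = u * (1 + \<xi>\<^sub>1)" "r\<^sub>1 * r\<^sub>2 = u * (u * \<xi>\<^sub>1 - 1)"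
    using split by blast
  obtain r\<^sub>3 r\<^sub>4 where r\<^sub>3\<^sub>4: "r\<^sub>3 + r\<^sub>4 = u * (1 + \<xi>\<^sub>2)" "r\<^sub>3 * r\<^sub>4 = u * (u * \<xi>\<^sub>2 - 1)"
    using split by blast
  have factor: "(x - of_real u) * (x - of_real u * of_real \<xi>) - of_real u
      = (x - of_real r) * (x - of_real r')"
    if "r + r' = u * (1 + \<xi>)" "r * r' = u * (u * \<xi> - 1)" for x :: complex and \<xi> r r'
    unfolding mult_linear_of_real that by (simp add: algebra_simps power2_eq_square)
  have char_poly: "char_poly (tl_form \<zeta> (block_seifert_mat T q))
      = (\<Prod>r\<leftarrow>[r\<^sub>1, r\<^sub>2, r\<^sub>3, r\<^sub>4]. [:- complex_of_real r, 1:])"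
  proof (rule poly_eq_poly_eq_iff[THEN iffD1], rule ext)
    fix x :: complex
    have "cmod \<zeta> = 1"
      using \<open>\<zeta> \<in> S_set\<close> by (simp add: S_set_def)
    then show "poly (char_poly (tl_form \<zeta> (block_seifert_mat T q))) x
        = poly (\<Prod>r\<leftarrow>[r\<^sub>1, r\<^sub>2, r\<^sub>3, r\<^sub>4]. [:- complex_of_real r, 1:]) x"
      unfolding poly_char_poly_tl_form_block_seifert_mat[OF eigen \<open>cmod \<zeta> = 1\<close>] u_def[symmetric]
        factor[OF r\<^sub>1\<^sub>2] factor[OF r\<^sub>3\<^sub>4] poly_prod_linear
      by (simp add: mult.assoc)
  qed
  have "of_int (tl_signature \<zeta> (block_seifert_mat T q)) = sgn r\<^sub>1 + sgn r\<^sub>2 + (sgn r\<^sub>3 + sgn r\<^sub>4)"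
    unfolding tl_signature_eq_signature_tl_form signature_eq_sum_sgn[OF char_poly] by simp
  then show ?thesis
    using that r\<^sub>1\<^sub>2 r\<^sub>3\<^sub>4 by blast
qed

lemma tl_signature_block_seifert_mat:
  fixes \<xi>\<^sub>1 \<xi>\<^sub>2 :: real and \<zeta> :: complex
  assumes eigen: "\<xi>\<^sub>1 + \<xi>\<^sub>2 = of_int T" "\<xi>\<^sub>1 * \<xi>\<^sub>2 = - of_int (q^2)"
    and "0 < \<xi>\<^sub>1" "\<xi>\<^sub>2 < 0" and "\<zeta> \<in> S_set"
  shows "1 - 1 / (2 * \<xi>\<^sub>1) < Re \<zeta> \<Longrightarrow> tl_signature \<zeta> (block_seifert_mat T q) = 0"
    and "Re \<zeta> < 1 - 1 / (2 * \<xi>\<^sub>1) \<Longrightarrow> tl_signature \<zeta> (block_seifert_mat T q) = 2"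
proof -
  define u where "u = 2 - 2 * Re \<zeta>"
  have "0 < u"
    using abs_Re_S_set_less_1[OF \<open>\<zeta> \<in> S_set\<close>] by (simp add: u_def)
  obtain r\<^sub>1 r\<^sub>2 r\<^sub>3 r\<^sub>4 where r\<^sub>1\<^sub>2: "r\<^sub>1 + r\<^sub>2 = u * (1 + \<xi>\<^sub>1)" "r\<^sub>1 * r\<^sub>2 = u * (u * \<xi>\<^sub>1 - 1)"
    and r\<^sub>3\<^sub>4: "r\<^sub>3 * r\<^sub>4 = u * (u * \<xi>\<^sub>2 - 1)"
    and sig: "of_int (tl_signature \<zeta> (block_seifert_mat T q))
      = sgn r\<^sub>1 + sgn r\<^sub>2 + (sgn r\<^sub>3 + sgn r\<^sub>4)"
    using tl_signature_block_seifert_mat_sgn[OF eigen \<open>\<zeta> \<in> S_set\<close>] unfolding u_def by metis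
  have "u * \<xi>\<^sub>2 < 0"
    using \<open>0 < u\<close> \<open>\<xi>\<^sub>2 < 0\<close> by (rule mult_pos_neg)
  then have "sgn r\<^sub>3 + sgn r\<^sub>4 = 0"
    using \<open>0 < u\<close> r\<^sub>3\<^sub>4 by (intro sgn_add_sgn_of_mult_neg) (simp add: mult_pos_neg)
  then have sig': "of_int (tl_signature \<zeta> (block_seifert_mat T q)) = sgn r\<^sub>1 + sgn r\<^sub>2"
    using sig by simp
  have u_less_iff: "u * \<xi>\<^sub>1 < 1 \<longleftrightarrow> 1 - 1 / (2 * \<xi>\<^sub>1) < Re \<zeta>"
    using \<open>0 < \<xi>\<^sub>1\<close> by (simp add: u_def field_simps)
  show "1 - 1 / (2 * \<xi>\<^sub>1) < Re \<zeta> \<Longrightarrow> tl_signature \<zeta> (block_seifert_mat T q) = 0"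
    using sig' sgn_add_sgn_of_mult_neg[of r\<^sub>1 r\<^sub>2] \<open>0 < u\<close>
    by (simp add: r\<^sub>1\<^sub>2 u_less_iff[symmetric] mult_pos_neg)
  have u_greater_iff: "1 < u * \<xi>\<^sub>1 \<longleftrightarrow> Re \<zeta> < 1 - 1 / (2 * \<xi>\<^sub>1)"
    using \<open>0 < \<xi>\<^sub>1\<close> by (simp add: u_def field_simps)
  show "Re \<zeta> < 1 - 1 / (2 * \<xi>\<^sub>1) \<Longrightarrow> tl_signature \<zeta> (block_seifert_mat T q) = 2"
    using sig' sgn_add_sgn_of_mult_pos[of r\<^sub>1 r\<^sub>2] \<open>0 < u\<close> \<open>0 < \<xi>\<^sub>1\<close>
    by (simp add: r\<^sub>1\<^sub>2 u_greater_iff[symmetric])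
qed

text \<open>
  Choose \<open>q\<close> with \<open>q\<^sup>2 (1/a - 1/b) > 1\<close>, so that the interval \<open>(a - q\<^sup>2/a, b - q\<^sup>2/b)\<close> contains an
  integer \<open>T\<close>; then \<open>y\<^sup>2 - T y - q\<^sup>2\<close> is negative at \<open>a\<close> and positive at \<open>b\<close>.
\<close>

lemma block_eigenvalue_dense:
  fixes a b :: real
  assumes "0 < a" and "a < b"
  obtains \<xi>\<^sub>1 \<xi>\<^sub>2 :: real and T q :: int
  where "\<xi>\<^sub>1 + \<xi>\<^sub>2 = of_int T" "\<xi>\<^sub>1 * \<xi>\<^sub>2 = - of_int (q^2)" "a < \<xi>\<^sub>1" "\<xi>\<^sub>1 < b" "\<xi>\<^sub>2 < 0"
proof -
  have gap: "0 < 1 / a - 1 / b"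
    using assms by (simp add: field_simps)
  obtain n :: nat where n: "1 / (1 / a - 1 / b) < real n"
    using reals_Archimedean2 by blast
  then have "1 \<le> n"
    using gap by (cases n) auto
  define Q where "Q = real (n^2)"
  have "real n \<le> Q"
    using \<open>1 \<le> n\<close> by (simp add: Q_def power2_eq_square)
  then have "real n * (1 / a - 1 / b) \<le> Q * (1 / a - 1 / b)"
    using gap by (intro mult_right_mono) auto
  moreover have "1 < real n * (1 / a - 1 / b)"
    using n gap by (simp add: divide_less_eq)
  ultimately have "1 < Q * (1 / a - 1 / b)"
    by linarith
  moreover have "Q * (1 / a - 1 / b) = Q / a - Q / b"
    by (simp add: right_diff_distrib)
  ultimately have "(a - Q / a) + 1 < b - Q / b"
    using assms(2) by linarith
  define T :: int where "T = \<lfloor>a - Q / a\<rfloor> + 1"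
  have T: "a - Q / a < of_int T" "of_int T < b - Q / b"
    using \<open>(a - Q / a) + 1 < b - Q / b\<close> by (simp_all add: T_def) linarith+
  have "0 < Q"
    using \<open>1 \<le> n\<close> by (simp add: Q_def)
  moreover have "0 \<le> (real_of_int T)^2"
    by simp
  ultimately have "4 * (- Q) \<le> (of_int T)^2"
    by linarith
  then obtain \<xi>\<^sub>2 \<xi>\<^sub>1 where "\<xi>\<^sub>2 \<le> \<xi>\<^sub>1" and sum: "\<xi>\<^sub>2 + \<xi>\<^sub>1 = of_int T" and prod: "\<xi>\<^sub>2 * \<xi>\<^sub>1 = - Q"
    by (rule real_quadratic_roots)
  have "\<xi>\<^sub>2 * \<xi>\<^sub>1 < 0"
    using \<open>0 < Q\<close> prod by simp
  then have "\<xi>\<^sub>2 < 0" "0 < \<xi>\<^sub>1"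
    using \<open>\<xi>\<^sub>2 \<le> \<xi>\<^sub>1\<close> by (auto simp: mult_less_0_iff)
  have quadratic: "(y - \<xi>\<^sub>1) * (y - \<xi>\<^sub>2) = y * (y - Q / y - of_int T)" if "0 < y" for y
  proof -
    have "(y - \<xi>\<^sub>1) * (y - \<xi>\<^sub>2) = y * y - (\<xi>\<^sub>2 + \<xi>\<^sub>1) * y + \<xi>\<^sub>2 * \<xi>\<^sub>1"
      by (simp add: algebra_simps)
    also have "\<dots> = y * (y - Q / y - of_int T)"
      using that unfolding sum prod by (simp add: field_simps)
    finally show ?thesis .
  qed
  have "(a - \<xi>\<^sub>1) * (a - \<xi>\<^sub>2) < 0"
    using T(1) assms(1) by (simp add: quadratic mult_pos_neg)
  then have "a < \<xi>\<^sub>1"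
    using \<open>\<xi>\<^sub>2 < 0\<close> assms(1) by (auto simp: mult_less_0_iff)
  have "0 < (b - \<xi>\<^sub>1) * (b - \<xi>\<^sub>2)"
    using T(2) assms by (simp add: quadratic)
  then have "\<xi>\<^sub>1 < b"
    using \<open>\<xi>\<^sub>2 < 0\<close> assms by (auto simp: zero_less_mult_iff)
  show ?thesis
    by (rule that[of "\<xi>\<^sub>1" "\<xi>\<^sub>2" T "int n"])
      (use sum prod \<open>a < \<xi>\<^sub>1\<close> \<open>\<xi>\<^sub>1 < b\<close> \<open>\<xi>\<^sub>2 < 0\<close> in \<open>simp_all add: Q_def algebra_simps\<close>)
qed

lemma circle_point_approx:
  assumes "\<omega> \<in> S_set" and "0 < \<epsilon>"
  obtains a b :: real
  where "1/4 < a" "a < b" "\<And>\<xi>. a < \<xi> \<Longrightarrow> \<xi> < b \<Longrightarrow> cmod (circle_point (1 - 1 / (2 * \<xi>)) - \<omega>) < \<epsilon>"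
proof -
  define m where "m = 1 / (2 * (1 - Re \<omega>))"
  have "\<bar>Re \<omega>\<bar> < 1"
    using assms(1) by (rule abs_Re_S_set_less_1)
  then have "1/4 < m" and "1 - 1 / (2 * m) = Re \<omega>"
    by (simp_all add: m_def field_simps)
  let ?f = "\<lambda>\<xi>. circle_point (1 - 1 / (2 * \<xi>))"
  have "?f m = \<omega>"
    using circle_point_Re[OF assms(1)] \<open>1 - 1 / (2 * m) = Re \<omega>\<close> by simp
  have "?f \<midarrow>m\<rightarrow> ?f m"
    unfolding circle_point_def
    by (intro tendsto_Complex tendsto_intros) (use \<open>1/4 < m\<close> in auto)
  then have "(?f \<longlongrightarrow> ?f m) (nhds m)"
    by (rule tendsto_at_iff_tendsto_nhds[THEN iffD1])
  then have "(?f \<longlongrightarrow> \<omega>) (nhds m)"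
    unfolding \<open>?f m = \<omega>\<close> .
  then have "eventually (\<lambda>\<xi>. dist (?f \<xi>) \<omega> < \<epsilon>) (nhds m)"
    using \<open>0 < \<epsilon>\<close> by (rule tendstoD)
  then obtain \<delta> where "0 < \<delta>" and close: "\<And>\<xi>. dist \<xi> m < \<delta> \<Longrightarrow> dist (?f \<xi>) \<omega> < \<epsilon>"
    unfolding eventually_nhds_metric by blast
  show ?thesis
  proof (rule that[of "max (m - \<delta>) ((m + 1/4) / 2)" "m + \<delta>"])
    show "1/4 < max (m - \<delta>) ((m + 1/4) / 2)" and "max (m - \<delta>) ((m + 1/4) / 2) < m + \<delta>"
      using \<open>1/4 < m\<close> \<open>0 < \<delta>\<close> by (simp_all add: less_max_iff_disj)
    show "cmod (?f \<xi> - \<omega>) < \<epsilon>" if "max (m - \<delta>) ((m + 1/4) / 2) < \<xi>" "\<xi> < m + \<delta>" for \<xi>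
      using close[of \<xi>] that by (simp add: dist_norm abs_less_iff)
  qed
qed

theorem mainTheorem5:
  fixes \<omega> :: complex and \<epsilon> :: real
  assumes "\<omega> \<in> S_set" and "\<epsilon> > 0"
  shows "\<exists>\<omega>' V. \<omega>' \<in> S_set \<and> cmod (\<omega>' - \<omega>) < \<epsilon> \<and> seifert_matrix V \<and>
    (let D = map_poly (of_int :: int \<Rightarrow> complex) (alexander_poly V) in
       {z. poly D z = 0 \<and> Im z \<noteq> 0} = {\<omega>', cnj \<omega>'} \<and>
       order \<omega>' D = 1 \<and> order (cnj \<omega>') D = 1 \<and>
       cmod \<omega>' = 1 \<and> cmod (cnj \<omega>') = 1) \<and>
    (\<forall>\<zeta>\<in>S_set. Re \<zeta> > Re \<omega>' \<longrightarrow> tl_signature \<zeta> V = 0) \<and>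
    (\<exists>c. c \<noteq> 0 \<and> (\<forall>\<zeta>\<in>S_set. Re \<zeta> < Re \<omega>' \<longrightarrow> tl_signature \<zeta> V = c))"
proof -
  obtain a b where "1/4 < a" "a < b"
    and close: "\<And>\<xi>. a < \<xi> \<Longrightarrow> \<xi> < b \<Longrightarrow> cmod (circle_point (1 - 1 / (2 * \<xi>)) - \<omega>) < \<epsilon>"
    using circle_point_approx[OF assms] by blast
  have "0 < a"
    using \<open>1/4 < a\<close> by simp
  then obtain \<xi>\<^sub>1 \<xi>\<^sub>2 T q where eigen: "\<xi>\<^sub>1 + \<xi>\<^sub>2 = of_int T" "\<xi>\<^sub>1 * \<xi>\<^sub>2 = - of_int (q^2)"
    and "a < \<xi>\<^sub>1" "\<xi>\<^sub>1 < b" "\<xi>\<^sub>2 < 0"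
    using \<open>a < b\<close> by (rule block_eigenvalue_dense)
  have "1/4 < \<xi>\<^sub>1"
    using \<open>1/4 < a\<close> \<open>a < \<xi>\<^sub>1\<close> by simp
  define w where "w = circle_point (1 - 1 / (2 * \<xi>\<^sub>1))"
  have "w \<in> S_set"
    unfolding w_def by (rule circle_point_in_S_set[OF abs_one_minus_inverse_less_1]) fact
  have "cmod (w - \<omega>) < \<epsilon>"
    unfolding w_def using close \<open>a < \<xi>\<^sub>1\<close> \<open>\<xi>\<^sub>1 < b\<close> .
  have "let D = map_poly (of_int :: int \<Rightarrow> complex) (alexander_poly (block_seifert_mat T q)) in
      {z. poly D z = 0 \<and> Im z \<noteq> 0} = {w, cnj w} \<and> order w D = 1 \<and> order (cnj w) D = 1 \<and>
      cmod w = 1 \<and> cmod (cnj w) = 1"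
    using alexander_poly_block_seifert_mat_roots[OF eigen \<open>1/4 < \<xi>\<^sub>1\<close> \<open>\<xi>\<^sub>2 < 0\<close>, folded w_def]
      \<open>w \<in> S_set\<close> by (simp add: Let_def S_set_def)
  moreover have "\<forall>\<zeta>\<in>S_set. Re \<zeta> > Re w \<longrightarrow> tl_signature \<zeta> (block_seifert_mat T q) = 0"
    and "\<forall>\<zeta>\<in>S_set. Re \<zeta> < Re w \<longrightarrow> tl_signature \<zeta> (block_seifert_mat T q) = 2"
    using tl_signature_block_seifert_mat[OF eigen _ \<open>\<xi>\<^sub>2 < 0\<close>] \<open>1/4 < \<xi>\<^sub>1\<close>
    by (simp_all add: w_def)
  ultimately show ?thesis
    using \<open>w \<in> S_set\<close> \<open>cmod (w - \<omega>) < \<epsilon>\<close> seifert_matrix_block_seifert_mat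
    by (intro exI[of _ w] exI[of _ "block_seifert_mat T q"]) (metis zero_neq_numeral)
qed

end
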